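(* Let $\mathcal{H}_A,\mathcal{H}_B,\mathcal{H}_C$ be finite-dimensional Hilbert spaces with $d_A=\dim\mathcal{H}_A$, let $\rho_{ABC}$ be pure, let $Z=\{|j\rangle\}_{j=1}^{d_A}$ be an orthonormal basis of $\mathcal{H}_A$, and let $\mathcal{S}_Z$ be the set of pure states $|\psi\rangle\in\mathcal{H}_A$ unbiased w.r.t. $Z$, i.e. of the form $|\psi\rangle=\sum_j \frac{e^{i\phi_j}}{\sqrt{d_A}}|j\rangle$. Then $$d_A^2\,\big\langle \mathrm{Tr}\big[\mathcal{T}_B(|\psi\rangle\langle\psi|)^2\big]\big\rangle_{\mathcal{S}_Z}=\mathrm{Tr}(\rho_B^2)+H_Q(Z|C),$$ where $\langle\cdot\rangle_{\mathcal{S}_Z}$ is the average over $|\psi\rangle\in\mathcal{S}_Z$ with the phases $\phi_j$ independent and uniformly distributed on $[0,2\pi)$.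
   Context: $\mathcal{T}_B$ is the linear map from operators on $\mathcal{H}_A$ to operators on $\mathcal{H}_B$ given by $\mathcal{T}_B(X)=\mathrm{Tr}_A[(X\otimes I_B)\rho_{AB}]$, with $\rho_{AB}=\mathrm{Tr}_C\rho_{ABC}$. $H_Q(Z|C)=\mathrm{Tr}(\rho_C^2)-\mathrm{Tr}(\tilde\rho_{M_ZC}^2)$, where $\tilde\rho_{M_ZC}=\sum_j|j\rangle\langle j|_{M_Z}\otimes\mathrm{Tr}_A[(|j\rangle\langle j|\otimes I_C)\rho_{AC}]$ for a register $M_Z$ with orthonormal basis $\{|j\rangle\}$; equivalently $H_Q(Z|C)=\mathrm{Tr}(\rho_C^2)-\sum_j\mathrm{Tr}\big[(\mathrm{Tr}_A[(|j\rangle\langle j|\otimes I_C)\rho_{AC}])^2\big]$. *)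

theory Defs
  imports "HOL-Analysis.Analysis"
begin

text \<open>Finite-dimensional Hilbert spaces are modelled as coordinate spaces
  \<open>'a \<Rightarrow> complex\<close> over a finite index type; operators as matrices \<open>'a \<Rightarrow> 'a \<Rightarrow> complex\<close>.
  The tripartite system ABC is indexed by \<open>('a \<times> 'b) \<times> 'c\<close>.\<close>

type_synonym 'a op = "'a \<Rightarrow> 'a \<Rightarrow> complex"

definition mmult :: "'a::finite op \<Rightarrow> 'a op \<Rightarrow> 'a op" where
  "mmult M N = (\<lambda>x y. \<Sum>z\<in>UNIV. M x z * N z y)"

definition trace :: "'a::finite op \<Rightarrow> complex" where
  "trace M = (\<Sum>x\<in>UNIV. M x x)"

definition proj :: "('a \<Rightarrow> complex) \<Rightarrow> 'a op" where
  "proj v = (\<lambda>x y. v x * cnj (v y))"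

definition tensor_id :: "'a op \<Rightarrow> ('a \<times> 'b) op" where
  "tensor_id X = (\<lambda>(a,b) (a',b'). X a a' * (if b = b' then 1 else 0))"

definition ptrace1 :: "('a::finite \<times> 'b) op \<Rightarrow> 'b op" where
  "ptrace1 M = (\<lambda>b b'. \<Sum>a\<in>UNIV. M (a,b) (a,b'))"

definition ptrace2 :: "('a \<times> 'b::finite) op \<Rightarrow> 'a op" where
  "ptrace2 M = (\<lambda>a a'. \<Sum>b\<in>UNIV. M (a,b) (a',b))"

definition swapBC :: "(('a \<times> 'b) \<times> 'c) op \<Rightarrow> (('a \<times> 'c) \<times> 'b) op" where
  "swapBC M = (\<lambda>((a,c),b) ((a',c'),b'). M ((a,b),c) ((a',b'),c'))"

definition rhoAB :: "(('a \<times> 'b) \<times> 'c::finite) op \<Rightarrow> ('a \<times> 'b) op" where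
  "rhoAB \<rho> = ptrace2 \<rho>"

definition rhoAC :: "(('a \<times> 'b::finite) \<times> 'c) op \<Rightarrow> ('a \<times> 'c) op" where
  "rhoAC \<rho> = ptrace2 (swapBC \<rho>)"

definition rhoB :: "(('a::finite \<times> 'b) \<times> 'c::finite) op \<Rightarrow> 'b op" where
  "rhoB \<rho> = ptrace1 (rhoAB \<rho>)"

definition rhoC :: "(('a::finite \<times> 'b::finite) \<times> 'c) op \<Rightarrow> 'c op" where
  "rhoC \<rho> = ptrace1 \<rho>"

definition TB :: "(('a::finite \<times> 'b::finite) \<times> 'c::finite) op \<Rightarrow> 'a op \<Rightarrow> 'b op" where
  "TB \<rho> X = ptrace1 (mmult (tensor_id X) (rhoAB \<rho>))"

text \<open>\<open>H_Q(Z|C) = Tr(\<rho>_C^2) - \<Sum>_j Tr[(Tr_A[(|j\<rangle>\<langle>j| \<otimes> I_C) \<rho>_AC])^2]\<close>,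
  where the orthonormal basis Z is given by the family \<open>z\<close>, \<open>|j\<rangle> = z j\<close>.\<close>
definition HQ :: "(('a::finite \<times> 'b::finite) \<times> 'c::finite) op \<Rightarrow> ('a \<Rightarrow> 'a \<Rightarrow> complex) \<Rightarrow> complex" where
  "HQ \<rho> z = trace (mmult (rhoC \<rho>) (rhoC \<rho>))
     - (\<Sum>j\<in>UNIV. let S = ptrace1 (mmult (tensor_id (proj (z j))) (rhoAC \<rho>))
                  in trace (mmult S S))"

definition orthonormal_basis :: "('a::finite \<Rightarrow> 'a \<Rightarrow> complex) \<Rightarrow> bool" where
  "orthonormal_basis z \<longleftrightarrow>
     (\<forall>j k. (\<Sum>a\<in>UNIV. cnj (z j a) * z k a) = (if j = k then 1 else 0))"

definition pure_state :: "'a::finite op \<Rightarrow> bool" where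
  "pure_state \<rho> \<longleftrightarrow> (\<exists>\<Psi>. (\<Sum>x\<in>UNIV. (cmod (\<Psi> x))\<^sup>2) = 1 \<and> \<rho> = proj \<Psi>)"

definition unbiased_state :: "('a::finite \<Rightarrow> 'a \<Rightarrow> complex) \<Rightarrow> ('a \<Rightarrow> real) \<Rightarrow> 'a \<Rightarrow> complex" where
  "unbiased_state z \<phi> = (\<lambda>a. \<Sum>j\<in>UNIV. exp (\<i> * of_real (\<phi> j)) / of_real (sqrt (real CARD('a))) * z j a)"

definition phase_measure :: "('a::finite \<Rightarrow> real) measure" where
  "phase_measure = PiM UNIV (\<lambda>_. uniform_measure lborel {0..<2*pi})"

end

theory Submission
  imports Defs "HOL-Probability.Infinite_Product_Measure"
begin

text \<open>Expanding \<open>|\<psi>\<rangle>\<langle>\<psi>|\<close> in the basis \<open>Z\<close> writes \<open>\<T>_B(|\<psi>\<rangle>\<langle>\<psi>|)\<close> as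
  \<open>d\<^sup>-\<^sup>1 \<Sum>_{j,k} e^{i(\<phi>_j-\<phi>_k)} \<T>_B(|j\<rangle>\<langle>k|)\<close>, so its squared trace is a quadratic form in the
  phase factors. Averaging over independent uniform phases kills every monomial
  \<open>e^{i(\<phi>_j-\<phi>_k+\<phi>_l-\<phi>_m)}\<close> except those with \<open>(j,l) = (k,m)\<close> or \<open>(j,l) = (m,k)\<close>; the first pairing
  yields \<open>Tr[\<T>_B(I)\<^sup>2] = Tr \<rho>_B\<^sup>2\<close>, the second \<open>\<Sum>_{j,l} Tr[\<T>_B(|j\<rangle>\<langle>l|) \<T>_B(|l\<rangle>\<langle>j|)]\<close>, and
  the diagonal \<open>j = k = l = m\<close> is counted twice. For a pure state with amplitudes
  \<open>F_j(b,c) = \<langle>j|\<Psi>_{bc}\<rangle>\<close> one has \<open>\<T>_B(|j\<rangle>\<langle>l|) = F_l F_j\<^sup>\<dagger>\<close>, which turns the second sum into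
  \<open>Tr \<rho>_C\<^sup>2\<close> and the diagonal terms into the conditional terms of \<open>H_Q(Z|C)\<close>.\<close>

lemma sum_UNIV_prod:
  "(\<Sum>p\<in>(UNIV::('x::finite \<times> 'y::finite) set). f p) = (\<Sum>x\<in>UNIV. \<Sum>y\<in>UNIV. f (x,y))"
  by (simp add: sum.cartesian_product UNIV_Times_UNIV[symmetric] del: UNIV_Times_UNIV)

lemma sum_delta_mult:
  fixes x :: "'x::finite" and f :: "'x \<Rightarrow> 'r::semiring_0"
  shows "(\<Sum>y\<in>UNIV. (if x = y then c else 0) * f y) = c * f x"
proof -
  have "(\<Sum>y\<in>UNIV. (if x = y then c else 0) * f y) = (\<Sum>y\<in>UNIV. if x = y then c * f x else 0)"
    by (rule sum.cong) auto
  then show ?thesis by (simp add: sum.delta)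
qed

lemma sum_swap_outer_inner:
  fixes f :: "'x \<Rightarrow> 'y \<Rightarrow> 'w \<Rightarrow> 'r::comm_monoid_add"
  assumes "finite A" "finite B" "finite C"
  shows "(\<Sum>x\<in>A. \<Sum>y\<in>B. \<Sum>w\<in>C. f x y w) = (\<Sum>w\<in>C. \<Sum>y\<in>B. \<Sum>x\<in>A. f x y w)"
proof -
  have "(\<Sum>x\<in>A. \<Sum>y\<in>B. \<Sum>w\<in>C. f x y w) = (\<Sum>x\<in>A. \<Sum>w\<in>C. \<Sum>y\<in>B. f x y w)"
    by (rule sum.cong[OF refl], rule sum.swap)
  also have "\<dots> = (\<Sum>w\<in>C. \<Sum>x\<in>A. \<Sum>y\<in>B. f x y w)" by (rule sum.swap)
  also have "\<dots> = (\<Sum>w\<in>C. \<Sum>y\<in>B. \<Sum>x\<in>A. f x y w)"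
    by (rule sum.cong[OF refl], rule sum.swap)
  finally show ?thesis .
qed

lemma sum_swap_2_2:
  fixes f :: "'x::finite \<Rightarrow> 'y::finite \<Rightarrow> 'u::finite \<Rightarrow> 'v::finite \<Rightarrow> 'r::comm_monoid_add"
  shows "(\<Sum>x\<in>UNIV. \<Sum>y\<in>UNIV. \<Sum>u\<in>UNIV. \<Sum>v\<in>UNIV. f x y u v)
       = (\<Sum>u\<in>UNIV. \<Sum>v\<in>UNIV. \<Sum>x\<in>UNIV. \<Sum>y\<in>UNIV. f x y u v)"
  using sum.swap[of "\<lambda>p q. f (fst p) (snd p) (fst q) (snd q)" UNIV UNIV] by (simp add: sum_UNIV_prod)

lemma sum_swap_2_4:
  fixes f :: "'x::finite \<Rightarrow> 'y::finite \<Rightarrow> 'u1::finite \<Rightarrow> 'u2::finite \<Rightarrow> 'u3::finite \<Rightarrow> 'u4::finite \<Rightarrow> 'r::comm_monoid_add"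
  shows "(\<Sum>x\<in>UNIV. \<Sum>y\<in>UNIV. \<Sum>u1\<in>UNIV. \<Sum>u2\<in>UNIV. \<Sum>u3\<in>UNIV. \<Sum>u4\<in>UNIV. f x y u1 u2 u3 u4)
       = (\<Sum>u1\<in>UNIV. \<Sum>u2\<in>UNIV. \<Sum>u3\<in>UNIV. \<Sum>u4\<in>UNIV. \<Sum>x\<in>UNIV. \<Sum>y\<in>UNIV. f x y u1 u2 u3 u4)"
  using sum.swap[of "\<lambda>p q. f (fst p) (snd p) (fst q) (fst (snd q)) (fst (snd (snd q))) (snd (snd (snd q)))" UNIV UNIV]
  by (simp add: sum_UNIV_prod)

lemma ptrace1_mmult_tensor_id:
  "ptrace1 (mmult (tensor_id X) R) b b' = (\<Sum>a\<in>UNIV. \<Sum>a'\<in>UNIV. X a a' * R (a',b) (a,b'))"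
proof -
  have "ptrace1 (mmult (tensor_id X) R) b b'
      = (\<Sum>a\<in>UNIV. \<Sum>a'\<in>UNIV. \<Sum>y\<in>UNIV. (if b = y then 1 else 0) * (X a a' * R (a',y) (a,b')))"
    unfolding ptrace1_def mmult_def tensor_id_def by (simp add: sum_UNIV_prod mult_ac)
  then show ?thesis by (simp only: sum_delta_mult mult_1)
qed

lemma TB_sum:
  assumes "finite I"
  shows "TB \<rho> (\<lambda>x y. \<Sum>i\<in>I. s i * X i x y) = (\<lambda>b b'. \<Sum>i\<in>I. s i * TB \<rho> (X i) b b')"
proof (intro ext)
  fix b b'
  have "TB \<rho> (\<lambda>x y. \<Sum>i\<in>I. s i * X i x y) b b'
      = (\<Sum>a\<in>UNIV. \<Sum>a'\<in>UNIV. \<Sum>i\<in>I. s i * (X i a a' * rhoAB \<rho> (a',b) (a,b')))"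
    unfolding TB_def ptrace1_mmult_tensor_id by (simp add: sum_distrib_left sum_distrib_right mult_ac)
  also have "\<dots> = (\<Sum>i\<in>I. \<Sum>a'\<in>UNIV. \<Sum>a\<in>UNIV. s i * (X i a a' * rhoAB \<rho> (a',b) (a,b')))"
    using assms by (rule sum_swap_outer_inner[OF finite finite])
  also have "\<dots> = (\<Sum>i\<in>I. s i * TB \<rho> (X i) b b')"
    unfolding TB_def ptrace1_mmult_tensor_id
    by (simp add: sum_distrib_left) (intro sum.cong refl sum.swap)
  finally show "TB \<rho> (\<lambda>x y. \<Sum>i\<in>I. s i * X i x y) b b' = (\<Sum>i\<in>I. s i * TB \<rho> (X i) b b')" .
qed

lemma TB_identity: "TB \<rho> (\<lambda>x y. if x = y then 1 else 0) = rhoB \<rho>"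
  by (intro ext) (simp add: TB_def ptrace1_mmult_tensor_id sum_delta_mult, simp add: rhoB_def ptrace1_def)

lemma trace_mmult_sum:
  fixes A :: "'p \<Rightarrow> 'x::finite op" and B :: "'q \<Rightarrow> 'x op"
  assumes "finite P" "finite Q"
  shows "trace (mmult (\<lambda>x y. \<Sum>p\<in>P. s p * A p x y) (\<lambda>x y. \<Sum>q\<in>Q. r q * B q x y))
       = (\<Sum>p\<in>P. \<Sum>q\<in>Q. s p * r q * trace (mmult (A p) (B q)))"
proof -
  have "trace (mmult (\<lambda>x y. \<Sum>p\<in>P. s p * A p x y) (\<lambda>x y. \<Sum>q\<in>Q. r q * B q x y))
     = (\<Sum>x\<in>UNIV. \<Sum>y\<in>UNIV. \<Sum>p\<in>P. \<Sum>q\<in>Q. s p * r q * (A p x y * B q y x))"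
    unfolding trace_def mmult_def by (simp add: sum_product mult_ac)
  also have "\<dots> = (\<Sum>p\<in>P. \<Sum>q\<in>Q. \<Sum>x\<in>UNIV. \<Sum>y\<in>UNIV. s p * r q * (A p x y * B q y x))"
    using sum.swap[where g="\<lambda>xy pq. s (fst pq) * r (snd pq) * (A (fst pq) (fst xy) (snd xy) * B (snd pq) (snd xy) (fst xy))"
        and A=UNIV and B="P \<times> Q"] assms
    by (simp add: sum.cartesian_product' sum_UNIV_prod)
  also have "\<dots> = (\<Sum>p\<in>P. \<Sum>q\<in>Q. s p * r q * trace (mmult (A p) (B q)))"
    unfolding trace_def mmult_def by (simp add: sum_distrib_left)
  finally show ?thesis .
qed

lemma orthonormal_basis_complete:
  fixes z :: "'a::finite \<Rightarrow> 'a \<Rightarrow> complex"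
  assumes "orthonormal_basis z"
  shows "(\<Sum>j\<in>UNIV. z j x * cnj (z j y)) = (if x = y then 1 else 0)"
proof -
  define A :: "complex^'a^'a" where "A = (\<chi> j a. z j a)"
  define B :: "complex^'a^'a" where "B = (\<chi> a k. cnj (z k a))"
  have "(\<Sum>a\<in>UNIV. z j a * cnj (z k a)) = (if j = k then 1 else 0)" for j k
  proof -
    have "(\<Sum>a\<in>UNIV. z j a * cnj (z k a)) = cnj (\<Sum>a\<in>UNIV. cnj (z j a) * z k a)"
      by (simp add: mult.commute)
    then show ?thesis
      using assms unfolding orthonormal_basis_def by simp
  qed
  then have "A ** B = mat 1"
    unfolding A_def B_def by (simp add: matrix_matrix_mult_def mat_def vec_eq_iff)
  \<comment> \<open>a one-sided inverse of a square matrix is two-sided: the rows of \<open>A\<close> are orthonormal too\<close>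
  then have "(B ** A) $ y $ x = mat 1 $ y $ x"
    by (simp add: matrix_left_right_inverse1)
  then have "(\<Sum>j\<in>UNIV. cnj (z j y) * z j x) = (if x = y then 1 else 0)"
    unfolding A_def B_def by (auto simp: matrix_matrix_mult_def mat_def)
  then show ?thesis by (simp add: mult.commute)
qed

definition outer :: "('a \<Rightarrow> complex) \<Rightarrow> ('a \<Rightarrow> complex) \<Rightarrow> 'a op" where
  "outer v w = (\<lambda>x y. v x * cnj (w y))"

lemma sum_outer_orthonormal_basis:
  assumes "orthonormal_basis z"
  shows "(\<lambda>x y. \<Sum>j\<in>UNIV. 1 * outer (z j) (z j) x y) = (\<lambda>x y. if x = y then 1 else 0)"
  using orthonormal_basis_complete[OF assms] by (simp add: outer_def)

definition phase :: "('a \<Rightarrow> real) \<Rightarrow> 'a \<Rightarrow> complex" where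
  "phase \<phi> j = exp (\<i> * of_real (\<phi> j))"

definition unbiased_coeff :: "('a::finite \<Rightarrow> real) \<Rightarrow> 'a \<times> 'a \<Rightarrow> complex" where
  "unbiased_coeff \<phi> p = phase \<phi> (fst p) * cnj (phase \<phi> (snd p)) / of_nat CARD('a)"

lemma proj_unbiased_state:
  "proj (unbiased_state z \<phi>) = (\<lambda>x y. \<Sum>p\<in>UNIV. unbiased_coeff \<phi> p * outer (z (fst p)) (z (snd p)) x y)"
proof (intro ext)
  fix x y :: 'a
  define s :: complex where "s = of_real (sqrt (real CARD('a)))"
  have s_sq: "s * s = of_nat CARD('a)"
    unfolding s_def of_real_mult[symmetric] by simp
  have "unbiased_state z \<phi> w = (\<Sum>j\<in>UNIV. phase \<phi> j / s * z j w)" for w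
    unfolding unbiased_state_def phase_def s_def ..
  moreover have "cnj s = s" unfolding s_def by (rule complex_cnj_complex_of_real)
  ultimately have "proj (unbiased_state z \<phi>) x y
      = (\<Sum>j\<in>UNIV. \<Sum>k\<in>UNIV. (phase \<phi> j / s * z j x) * (cnj (phase \<phi> k) / s * cnj (z k y)))"
    by (simp add: proj_def sum_product)
  also have "\<dots> = (\<Sum>j\<in>UNIV. \<Sum>k\<in>UNIV. unbiased_coeff \<phi> (j,k) * outer (z j) (z k) x y)"
    by (simp add: unbiased_coeff_def outer_def s_sq[symmetric] mult_ac)
  finally show "proj (unbiased_state z \<phi>) x y
      = (\<Sum>p\<in>UNIV. unbiased_coeff \<phi> p * outer (z (fst p)) (z (snd p)) x y)"
    by (simp add: sum_UNIV_prod)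
qed

lemma prob_space_uniform_phase: "prob_space (uniform_measure lborel {0..<2*pi})"
  by (rule prob_space_uniform_measure) auto

lemma prob_space_phase_measure: "prob_space phase_measure"
  unfolding phase_measure_def by (intro prob_space_PiM prob_space_uniform_phase)

lemma integral_uniform_phase_exp_int:
  fixes n :: int
  shows "(\<integral>t. exp (\<i> * of_int n * of_real t) \<partial>uniform_measure lborel {0..<2*pi}) = (if n = 0 then 1 else 0)"
proof (cases "n = 0")
  case True
  then show ?thesis
    using prob_space.prob_space prob_space_uniform_phase by (simp add: measure_def)
next
  case False
  let ?f = "\<lambda>t. exp (\<i> * of_int n * of_real t)"
  have "uniform_measure lborel {0..<2*pi} = density lborel (\<lambda>t. ennreal (indicator {0..<2*pi} t / (2*pi)))"
    using divide_ennreal[of 1 "2*pi"] unfolding uniform_measure_def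
    by (intro density_cong) (auto simp: indicator_def)
  then have "(\<integral>t. ?f t \<partial>uniform_measure lborel {0..<2*pi}) = (1/(2*pi)) *\<^sub>R (LBINT t:{0..<2*pi}. ?f t)"
    unfolding set_lebesgue_integral_def
    by (simp add: integral_density integral_scaleR_right[symmetric])
  also have "(LBINT t:{0..<2*pi}. ?f t) = (LBINT t=ereal 0..ereal (2*pi). ?f t)"
    using interval_integral_Ico[of 0 "2*pi"] by (metis zero_ereal_def pi_ge_zero mult_nonneg_nonneg zero_le_numeral)
  also have "\<dots> = ?f (2*pi) / (\<i> * of_int n) - ?f 0 / (\<i> * of_int n)"
  proof (rule interval_integral_FTC_finite)
    show "continuous_on {min 0 (2 * pi)..max 0 (2 * pi)} ?f"
      by (intro continuous_intros)
    fix x :: real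
    have e: "\<And>t. \<i> * of_int n * complex_of_real t = t *\<^sub>R (\<i> * of_int n)"
      by (simp add: scaleR_conv_of_real mult_ac)
    have "((\<lambda>t. exp (t *\<^sub>R (\<i> * of_int n)) / (\<i> * of_int n)) has_vector_derivative
        exp (x *\<^sub>R (\<i> * of_int n)) * (\<i> * of_int n) / (\<i> * of_int n)) (at x within {min 0 (2 * pi)..max 0 (2 * pi)})"
      by (intro has_vector_derivative_divide exp_scaleR_has_vector_derivative_right)
    then show "((\<lambda>t. ?f t / (\<i> * of_int n)) has_vector_derivative ?f x) (at x within {min 0 (2 * pi)..max 0 (2 * pi)})"
      using False unfolding e by simp
  qed
  also have "?f (2*pi) = 1"
    using exp_integer_2pi[of "of_int n"] by (simp add: mult_ac)
  finally show ?thesis using False by simp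
qed

lemma integral_phase_measure_character:
  fixes n :: "'a::finite \<Rightarrow> int"
  shows "(\<integral>\<phi>. (\<Prod>x\<in>UNIV. exp (\<i> * of_int (n x) * of_real (\<phi> x))) \<partial>phase_measure) = (if \<forall>x. n x = 0 then 1 else 0)"
proof -
  let ?U = "uniform_measure lborel {0..<2*pi}"
  interpret product_sigma_finite "\<lambda>_::'a. ?U"
    unfolding product_sigma_finite_def
    using prob_space_imp_sigma_finite[OF prob_space_uniform_phase] by simp
  interpret U: prob_space ?U by (rule prob_space_uniform_phase)
  have "integrable ?U (\<lambda>t. exp (\<i> * of_int (n x) * of_real t))" for x
    by (rule U.integrable_const_bound[where B=1]) (simp_all add: norm_exp_eq_Re)
  then have "(\<integral>\<phi>. (\<Prod>x\<in>UNIV. exp (\<i> * of_int (n x) * of_real (\<phi> x))) \<partial>phase_measure)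
      = (\<Prod>x\<in>UNIV. \<integral>t. exp (\<i> * of_int (n x) * of_real t) \<partial>?U)"
    unfolding phase_measure_def
    by (intro product_integral_prod[where f="\<lambda>x t. exp (\<i> * of_int (n x) * of_real t)"]) auto
  also have "\<dots> = (\<Prod>x\<in>UNIV. if n x = 0 then 1 else 0)"
    by (simp add: integral_uniform_phase_exp_int)
  finally show ?thesis by (auto simp: prod_zero)
qed

lemma phase_quartic_eq_prod:
  fixes j k l m :: "'a::finite"
  defines "n x \<equiv> (if x = j then 1 else 0) - (if x = k then 1 else 0) + (if x = l then 1 else 0) - (if x = m then 1 else (0::int))"
  shows "phase \<phi> j * cnj (phase \<phi> k) * phase \<phi> l * cnj (phase \<phi> m)
    = (\<Prod>x\<in>UNIV. exp (\<i> * of_int (n x) * complex_of_real (\<phi> x)))"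
proof -
  have "\<i> * of_int (n x) * complex_of_real (\<phi> x)
     = (if x = j then \<i> * of_real (\<phi> j) else 0) - (if x = k then \<i> * of_real (\<phi> k) else 0)
       + (if x = l then \<i> * of_real (\<phi> l) else 0) - (if x = m then \<i> * of_real (\<phi> m) else 0)" for x
    unfolding n_def by (auto simp: algebra_simps)
  then have "(\<Sum>x\<in>UNIV. \<i> * of_int (n x) * complex_of_real (\<phi> x))
     = \<i> * of_real (\<phi> j) - \<i> * of_real (\<phi> k) + \<i> * of_real (\<phi> l) - \<i> * of_real (\<phi> m)"
    by (simp add: sum.distrib sum_subtractf)
  then show ?thesis
    unfolding exp_sum[OF finite, symmetric] phase_def exp_cnj
    by (simp add: exp_add[symmetric] exp_diff exp_minus field_simps)
qed

lemma integral_phase_quartic: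
  fixes j k l m :: "'a::finite"
  shows "(\<integral>\<phi>. phase \<phi> j * cnj (phase \<phi> k) * phase \<phi> l * cnj (phase \<phi> m) \<partial>phase_measure)
     = (if (j = k \<and> l = m) \<or> (j = m \<and> l = k) then 1 else 0)"
proof -
  define n :: "'a \<Rightarrow> int" where "n x = (if x = j then 1 else 0) - (if x = k then 1 else 0) + (if x = l then 1 else 0) - (if x = m then 1 else 0)" for x
  have "(\<forall>x. n x = 0) \<longleftrightarrow> (j = k \<and> l = m) \<or> (j = m \<and> l = k)"
  proof
    assume "\<forall>x. n x = 0"
    then have "n j = 0" "n k = 0" "n l = 0" by auto
    then show "(j = k \<and> l = m) \<or> (j = m \<and> l = k)"
      unfolding n_def by (auto split: if_splits)
  qed (auto simp: n_def)
  then show ?thesis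
    unfolding phase_quartic_eq_prod integral_phase_measure_character n_def[symmetric] by simp
qed

lemma integrable_unbiased_coeff_product:
  "integrable phase_measure (\<lambda>\<phi>. unbiased_coeff \<phi> p * unbiased_coeff \<phi> q)"
proof -
  interpret prob_space phase_measure by (rule prob_space_phase_measure)
  have "real CARD('a) * real CARD('a) \<ge> 1"
    using mult_mono[of 1 "real CARD('a)" 1 "real CARD('a)"] by (simp add: Suc_le_eq)
  then have "norm (unbiased_coeff \<phi> p * unbiased_coeff \<phi> q) \<le> 1" for \<phi> :: "'a \<Rightarrow> real"
    by (simp add: unbiased_coeff_def phase_def norm_mult norm_divide)
  then show ?thesis
    by (intro integrable_const_bound[where B=1])
      (simp_all add: unbiased_coeff_def phase_def phase_measure_def exp_cnj)
qed

lemma integral_unbiased_coeff_product: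
  fixes j k l m :: "'a::finite"
  shows "(\<integral>\<phi>. unbiased_coeff \<phi> (j,k) * unbiased_coeff \<phi> (l,m) \<partial>phase_measure)
     = (if (j = k \<and> l = m) \<or> (j = m \<and> l = k) then 1 else 0) / (of_nat CARD('a))\<^sup>2"
proof -
  have "unbiased_coeff \<phi> (j,k) * unbiased_coeff \<phi> (l,m)
      = phase \<phi> j * cnj (phase \<phi> k) * phase \<phi> l * cnj (phase \<phi> m) / (of_nat CARD('a))\<^sup>2"
    for \<phi> :: "'a \<Rightarrow> real"
    by (simp add: unbiased_coeff_def power2_eq_square)
  then show ?thesis by (simp add: integral_phase_quartic)
qed

lemma sum_pairings:
  fixes K :: "'a::finite \<Rightarrow> 'a \<Rightarrow> 'a \<Rightarrow> 'a \<Rightarrow> 'r::ab_group_add"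
  shows "(\<Sum>j\<in>UNIV. \<Sum>k\<in>UNIV. \<Sum>l\<in>UNIV. \<Sum>m\<in>UNIV. if (j = k \<and> l = m) \<or> (j = m \<and> l = k) then K j k l m else 0)
   = (\<Sum>j\<in>UNIV. \<Sum>l\<in>UNIV. K j j l l) + (\<Sum>j\<in>UNIV. \<Sum>l\<in>UNIV. K j l l j) - (\<Sum>j\<in>UNIV. K j j j j)"
proof -
  have "(if (j = k \<and> l = m) \<or> (j = m \<and> l = k) then K j k l m else 0)
    = (if k = j then (if m = l then K j k l m else 0) else 0) + (if m = j then (if k = l then K j k l m else 0) else 0)
      - (if k = j then (if m = l then (if l = j then K j k l m else 0) else 0) else 0)" for j k l m
    by auto
  moreover have "(\<Sum>x\<in>A. if P then f x else 0) = (if P then sum f A else 0)" for A P and f :: "'a \<Rightarrow> 'r"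
    by simp
  ultimately show ?thesis
    by (simp add: sum.distrib sum_subtractf sum.delta sum.delta' del: sum.If_cases)
qed

lemma phase_average_trace_TB_unbiased_square:
  fixes \<rho> :: "(('a::finite \<times> 'b::finite) \<times> 'c::finite) op" and z :: "'a \<Rightarrow> 'a \<Rightarrow> complex"
  defines "t j l \<equiv> TB \<rho> (outer (z j) (z l))"
  shows "(of_nat CARD('a))\<^sup>2 *
           (\<integral>\<phi>. (let T = TB \<rho> (proj (unbiased_state z \<phi>)) in trace (mmult T T)) \<partial>phase_measure)
       = (\<Sum>j\<in>UNIV. \<Sum>l\<in>UNIV. trace (mmult (t j j) (t l l))) + (\<Sum>j\<in>UNIV. \<Sum>l\<in>UNIV. trace (mmult (t j l) (t l j)))
         - (\<Sum>j\<in>UNIV. trace (mmult (t j j) (t j j)))"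
proof -
  define d :: complex where "d = of_nat CARD('a)"
  define K where "K p q = trace (mmult (t (fst p) (snd p)) (t (fst q) (snd q)))" for p q
  have "(let T = TB \<rho> (proj (unbiased_state z \<phi>)) in trace (mmult T T))
      = (\<Sum>p\<in>UNIV. \<Sum>q\<in>UNIV. K p q * (unbiased_coeff \<phi> p * unbiased_coeff \<phi> q))" for \<phi>
    unfolding Let_def proj_unbiased_state TB_sum[OF finite] trace_mmult_sum[OF finite finite] K_def t_def
    by (simp add: mult_ac)
  then have "(\<integral>\<phi>. (let T = TB \<rho> (proj (unbiased_state z \<phi>)) in trace (mmult T T)) \<partial>phase_measure)
      = (\<Sum>p\<in>UNIV. \<Sum>q\<in>UNIV. K p q * (\<integral>\<phi>. unbiased_coeff \<phi> p * unbiased_coeff \<phi> q \<partial>phase_measure))"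
    by (simp add: integrable_unbiased_coeff_product integrable_sum)
  also have "\<dots> = (\<Sum>j\<in>UNIV. \<Sum>k\<in>UNIV. \<Sum>l\<in>UNIV. \<Sum>m\<in>UNIV.
      (if (j = k \<and> l = m) \<or> (j = m \<and> l = k) then K (j,k) (l,m) else 0) / d\<^sup>2)"
    by (auto simp: sum_UNIV_prod integral_unbiased_coeff_product d_def intro!: sum.cong)
  finally have "d\<^sup>2 * (\<integral>\<phi>. (let T = TB \<rho> (proj (unbiased_state z \<phi>)) in trace (mmult T T)) \<partial>phase_measure)
      = (\<Sum>j\<in>UNIV. \<Sum>k\<in>UNIV. \<Sum>l\<in>UNIV. \<Sum>m\<in>UNIV.
          if (j = k \<and> l = m) \<or> (j = m \<and> l = k) then K (j,k) (l,m) else 0)"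
    by (simp add: sum_distrib_left d_def)
  then show ?thesis
    unfolding sum_pairings[of "\<lambda>j k l m. K (j,k) (l,m)"] by (simp add: K_def d_def)
qed

lemma sum_trace_TB_outer_diag:
  assumes "orthonormal_basis z"
  shows "(\<Sum>j\<in>UNIV. \<Sum>l\<in>UNIV. trace (mmult (TB \<rho> (outer (z j) (z j))) (TB \<rho> (outer (z l) (z l)))))
       = trace (mmult (rhoB \<rho>) (rhoB \<rho>))"
proof -
  have "rhoB \<rho> = (\<lambda>b b'. \<Sum>j\<in>UNIV. 1 * TB \<rho> (outer (z j) (z j)) b b')"
    unfolding TB_identity[symmetric] sum_outer_orthonormal_basis[OF assms, symmetric] TB_sum[OF finite] ..
  then show ?thesis
    using trace_mmult_sum[where s="\<lambda>_. 1" and r="\<lambda>_. 1" and P=UNIV and Q=UNIV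
        and A="\<lambda>j. TB \<rho> (outer (z j) (z j))" and B="\<lambda>j. TB \<rho> (outer (z j) (z j))"]
    by simp
qed

definition basis_coeff :: "(('a::finite \<times> 'b) \<times> 'c \<Rightarrow> complex) \<Rightarrow> ('a \<Rightarrow> 'a \<Rightarrow> complex) \<Rightarrow> 'a \<Rightarrow> 'b \<Rightarrow> 'c \<Rightarrow> complex" where
  "basis_coeff \<Psi> z j b c = (\<Sum>a\<in>UNIV. cnj (z j a) * \<Psi> ((a,b),c))"

lemma sum_basis_coeff_mult_cnj:
  fixes z :: "'a::finite \<Rightarrow> 'a \<Rightarrow> complex"
  assumes "orthonormal_basis z"
  shows "(\<Sum>j\<in>UNIV. basis_coeff \<Psi> z j b c * cnj (basis_coeff \<Psi> z j b' c'))
       = (\<Sum>a\<in>UNIV. \<Psi> ((a,b),c) * cnj (\<Psi> ((a,b'),c')))"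
proof -
  have "(\<Sum>j\<in>UNIV. basis_coeff \<Psi> z j b c * cnj (basis_coeff \<Psi> z j b' c'))
      = (\<Sum>j\<in>UNIV. \<Sum>a'\<in>UNIV. \<Sum>a\<in>UNIV. (z j a' * cnj (z j a)) * (\<Psi> ((a,b),c) * cnj (\<Psi> ((a',b'),c'))))"
    unfolding basis_coeff_def by (simp add: sum_product mult_ac)
  also have "\<dots> = (\<Sum>a\<in>UNIV. \<Sum>a'\<in>UNIV. \<Sum>j\<in>UNIV. (z j a' * cnj (z j a)) * (\<Psi> ((a,b),c) * cnj (\<Psi> ((a',b'),c'))))"
    by (rule sum_swap_outer_inner) auto
  also have "\<dots> = (\<Sum>a\<in>UNIV. \<Sum>a'\<in>UNIV. (if a = a' then 1 else 0) * (\<Psi> ((a,b),c) * cnj (\<Psi> ((a',b'),c'))))"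
    by (simp add: sum_distrib_right[symmetric] orthonormal_basis_complete[OF assms] eq_commute)
  finally show ?thesis
    by (simp only: sum_delta_mult mult_1)
qed

lemma sum_sum_mult_sum_factor:
  fixes X Y :: "'x::finite \<Rightarrow> 'r::comm_semiring_0" and P Q :: "'x \<Rightarrow> 'y::finite \<Rightarrow> 'r"
  shows "(\<Sum>a\<in>UNIV. \<Sum>a'\<in>UNIV. X a * Y a' * (\<Sum>c\<in>UNIV. P a' c * Q a c))
       = (\<Sum>c\<in>UNIV. (\<Sum>a'\<in>UNIV. Y a' * P a' c) * (\<Sum>a\<in>UNIV. X a * Q a c))"
proof -
  have "(\<Sum>a\<in>UNIV. \<Sum>a'\<in>UNIV. X a * Y a' * (\<Sum>c\<in>UNIV. P a' c * Q a c))
      = (\<Sum>a\<in>UNIV. \<Sum>a'\<in>UNIV. \<Sum>c\<in>UNIV. (Y a' * P a' c) * (X a * Q a c))"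
    by (simp add: sum_distrib_left mult_ac)
  also have "\<dots> = (\<Sum>c\<in>UNIV. \<Sum>a'\<in>UNIV. \<Sum>a\<in>UNIV. (Y a' * P a' c) * (X a * Q a c))"
    by (rule sum_swap_outer_inner) auto
  finally show ?thesis
    by (simp add: sum_product)
qed

lemma TB_proj_outer:
  fixes z :: "'a::finite \<Rightarrow> 'a \<Rightarrow> complex"
  shows "TB (proj \<Psi>) (outer (z j) (z l)) b b' = (\<Sum>c\<in>UNIV. basis_coeff \<Psi> z l b c * cnj (basis_coeff \<Psi> z j b' c))"
  unfolding TB_def ptrace1_mmult_tensor_id
  by (simp add: rhoAB_def ptrace2_def proj_def outer_def basis_coeff_def sum_sum_mult_sum_factor)

lemma ptrace1_tensor_proj_rhoAC_proj:
  fixes z :: "'a::finite \<Rightarrow> 'a \<Rightarrow> complex"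
  shows "ptrace1 (mmult (tensor_id (proj (z j))) (rhoAC (proj \<Psi>)))
     = (\<lambda>c c'. \<Sum>b\<in>UNIV. basis_coeff \<Psi> z j b c * cnj (basis_coeff \<Psi> z j b c'))"
  unfolding ptrace1_mmult_tensor_id
  by (intro ext) (simp add: rhoAC_def ptrace2_def swapBC_def proj_def basis_coeff_def sum_sum_mult_sum_factor)

lemma rhoC_proj:
  fixes z :: "'a::finite \<Rightarrow> 'a \<Rightarrow> complex"
  assumes "orthonormal_basis z"
  shows "rhoC (proj \<Psi>) c c' = (\<Sum>b\<in>UNIV. \<Sum>j\<in>UNIV. basis_coeff \<Psi> z j b c * cnj (basis_coeff \<Psi> z j b c'))"
proof -
  have "rhoC (proj \<Psi>) c c' = (\<Sum>a\<in>UNIV. \<Sum>b\<in>UNIV. \<Psi> ((a,b),c) * cnj (\<Psi> ((a,b),c')))"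
    unfolding rhoC_def ptrace1_def proj_def sum_UNIV_prod ..
  also have "\<dots> = (\<Sum>b\<in>UNIV. \<Sum>a\<in>UNIV. \<Psi> ((a,b),c) * cnj (\<Psi> ((a,b),c')))"
    by (rule sum.swap)
  finally show ?thesis
    by (simp add: sum_basis_coeff_mult_cnj[OF assms])
qed

lemma trace_TB_proj_outer_diag_square:
  fixes z :: "'a::finite \<Rightarrow> 'a \<Rightarrow> complex"
  shows "trace (mmult (TB (proj \<Psi>) (outer (z j) (z j))) (TB (proj \<Psi>) (outer (z j) (z j))))
     = (let S = ptrace1 (mmult (tensor_id (proj (z j))) (rhoAC (proj \<Psi>))) in trace (mmult S S))"
proof -
  let ?F = "basis_coeff \<Psi> z j"
  have "trace (mmult (TB (proj \<Psi>) (outer (z j) (z j))) (TB (proj \<Psi>) (outer (z j) (z j))))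
     = (\<Sum>b\<in>UNIV. \<Sum>b'\<in>UNIV. \<Sum>c\<in>UNIV. \<Sum>c'\<in>UNIV. (?F b c * cnj (?F b' c)) * (?F b' c' * cnj (?F b c')))"
    by (simp add: trace_def mmult_def TB_proj_outer sum_product)
  also have "\<dots> = (\<Sum>c\<in>UNIV. \<Sum>c'\<in>UNIV. \<Sum>b\<in>UNIV. \<Sum>b'\<in>UNIV. (?F b c * cnj (?F b' c)) * (?F b' c' * cnj (?F b c')))"
    by (rule sum_swap_2_2)
  also have "\<dots> = (let S = ptrace1 (mmult (tensor_id (proj (z j))) (rhoAC (proj \<Psi>))) in trace (mmult S S))"
    unfolding ptrace1_tensor_proj_rhoAC_proj by (simp add: trace_def mmult_def sum_product mult_ac)
  finally show ?thesis .
qed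

lemma sum_trace_TB_proj_outer_cross:
  fixes z :: "'a::finite \<Rightarrow> 'a \<Rightarrow> complex"
  assumes "orthonormal_basis z"
  shows "(\<Sum>j\<in>UNIV. \<Sum>l\<in>UNIV. trace (mmult (TB (proj \<Psi>) (outer (z j) (z l))) (TB (proj \<Psi>) (outer (z l) (z j)))))
       = trace (mmult (rhoC (proj \<Psi>)) (rhoC (proj \<Psi>)))"
proof -
  let ?F = "basis_coeff \<Psi> z"
  have "(\<Sum>j\<in>UNIV. \<Sum>l\<in>UNIV. trace (mmult (TB (proj \<Psi>) (outer (z j) (z l))) (TB (proj \<Psi>) (outer (z l) (z j)))))
     = (\<Sum>j\<in>UNIV. \<Sum>l\<in>UNIV. \<Sum>b\<in>UNIV. \<Sum>b'\<in>UNIV. \<Sum>c\<in>UNIV. \<Sum>c'\<in>UNIV.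
          (?F l b c * cnj (?F j b' c)) * (?F j b' c' * cnj (?F l b c')))"
    by (simp add: trace_def mmult_def TB_proj_outer sum_product)
  also have "\<dots> = (\<Sum>l\<in>UNIV. \<Sum>j\<in>UNIV. \<Sum>b\<in>UNIV. \<Sum>b'\<in>UNIV. \<Sum>c\<in>UNIV. \<Sum>c'\<in>UNIV.
          (?F l b c * cnj (?F j b' c)) * (?F j b' c' * cnj (?F l b c')))"
    by (rule sum.swap)
  also have "\<dots> = (\<Sum>b\<in>UNIV. \<Sum>b'\<in>UNIV. \<Sum>c\<in>UNIV. \<Sum>c'\<in>UNIV. \<Sum>l\<in>UNIV. \<Sum>j\<in>UNIV.
          (?F l b c * cnj (?F j b' c)) * (?F j b' c' * cnj (?F l b c')))"
    by (rule sum_swap_2_4)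
  also have "\<dots> = (\<Sum>c\<in>UNIV. \<Sum>c'\<in>UNIV. \<Sum>b\<in>UNIV. \<Sum>b'\<in>UNIV. \<Sum>l\<in>UNIV. \<Sum>j\<in>UNIV.
          (?F l b c * cnj (?F j b' c)) * (?F j b' c' * cnj (?F l b c')))"
    by (rule sum_swap_2_2)
  also have "\<dots> = trace (mmult (rhoC (proj \<Psi>)) (rhoC (proj \<Psi>)))"
    by (simp add: trace_def mmult_def rhoC_proj[OF assms] sum_product mult_ac)
  finally show ?thesis .
qed

theorem lemma1:
  fixes \<rho> :: "(('a::finite \<times> 'b::finite) \<times> 'c::finite) op"
    and z :: "'a \<Rightarrow> 'a \<Rightarrow> complex"
  assumes "pure_state \<rho>"
    and "orthonormal_basis z"
  shows "(of_nat CARD('a))\<^sup>2 *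
           (\<integral>\<phi>. (let T = TB \<rho> (proj (unbiased_state z \<phi>)) in trace (mmult T T)) \<partial>phase_measure)
         = trace (mmult (rhoB \<rho>) (rhoB \<rho>)) + HQ \<rho> z"
proof -
  obtain \<Psi> where \<rho>: "\<rho> = proj \<Psi>"
    using assms(1) unfolding pure_state_def by blast
  show ?thesis
    unfolding phase_average_trace_TB_unbiased_square sum_trace_TB_outer_diag[OF assms(2)]
      HQ_def \<rho> sum_trace_TB_proj_outer_cross[OF assms(2)] trace_TB_proj_outer_diag_square
    by simp
qed

end
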